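(* Let $M=(\mathbf a,\mathbf p,0)$ be a TFM that is U-DSIC and 1-SCP, let $\theta_i:[0,1]^n\to\mathbb R$ ($i=1,\dots,n$) be functions, let $\tilde r:[0,1]^n\to\mathbb R$ be arbitrary, and define $\tilde M=(\mathbf a,\tilde{\mathbf p},\tilde r)$ by $\tilde p_i(b_i,\mathbf b_{-i})=p_i(b_i,\mathbf b_{-i})+\frac{\theta_i(b_i,\mathbf b_{-i})}{a_i(b_i,\mathbf b_{-i})}$. If for every $i$ and every $b_i$, \[\mathbb E_{\mathbf b_{-i}\sim V_{-i}}[\theta_i(b_i,\mathbf b_{-i})]=0,\] then $\tilde M$ is U-BNIC.
   Context: Users' valuations are drawn from a distribution $V$; $V_{-i}$ denotes the distribution of the other users' valuations (given $v_i$). A TFM $(\mathbf a,\mathbf p,r)$ consists of allocation probabilities $\mathbf a$, payments-if-confirmed $\mathbf p$, and miner revenue $r$, all functions of the bid vector. User utility: $u_i(b_i,\mathbf b_{-i};v_i)=a_i(b_i,\mathbf b_{-i})(v_i-p_i(b_i,\mathbf b_{-i}))$. U-DSIC: for all $i,v_i,\mathbf b_{-i}$, $v_i\in\arg\max_{b_i}u_i(b_i,\mathbf b_{-i};v_i)$. U-BNIC: for all $i,v_i$, $v_i\in\arg\max_{b_i}\mathbb E_{\mathbf b_{-i}\sim V_{-i}}[u_i(b_i,\mathbf b_{-i};v_i)]$ (others bidding truthfully). 1-SCP: for all $i,v_i,\mathbf b_{-i}$, $v_i\in\arg\max_{b_i}[u_i(b_i,\mathbf b_{-i};v_i)+r(b_i,\mathbf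 b_{-i})]$. *)

theory Defs
  imports "HOL-Probability.Probability"
begin

text \<open>Bid profiles of n users: vectors in [0,1]^n, represented as functions
  nat => real that are 0 outside the index range {0..<n}.
  (b_i, b_{-i}) is written b(i := x).\<close>
definition bids :: "nat \<Rightarrow> (nat \<Rightarrow> real) set" where
  "bids n = {b. (\<forall>j<n. 0 \<le> b j \<and> b j \<le> 1) \<and> (\<forall>j\<ge>n. b j = 0)}"

definition util ::
  "(nat \<Rightarrow> (nat \<Rightarrow> real) \<Rightarrow> real) \<Rightarrow> (nat \<Rightarrow> (nat \<Rightarrow> real) \<Rightarrow> real)
    \<Rightarrow> nat \<Rightarrow> (nat \<Rightarrow> real) \<Rightarrow> real \<Rightarrow> real" where
  "util a p i b v = a i b * (v - p i b)"

definition TFM_alloc :: "nat \<Rightarrow> (nat \<Rightarrow> (nat \<Rightarrow> real) \<Rightarrow> real) \<Rightarrow> bool" where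
  "TFM_alloc n a = (\<forall>i<n. \<forall>b\<in>bids n. 0 \<le> a i b \<and> a i b \<le> 1)"

definition U_DSIC ::
  "nat \<Rightarrow> (nat \<Rightarrow> (nat \<Rightarrow> real) \<Rightarrow> real) \<Rightarrow> (nat \<Rightarrow> (nat \<Rightarrow> real) \<Rightarrow> real) \<Rightarrow> bool" where
  "U_DSIC n a p = (\<forall>i<n. \<forall>v\<in>{0..1}. \<forall>b\<in>bids n. \<forall>x\<in>{0..1}.
      util a p i (b(i := x)) v \<le> util a p i (b(i := v)) v)"

definition SCP1 ::
  "nat \<Rightarrow> (nat \<Rightarrow> (nat \<Rightarrow> real) \<Rightarrow> real) \<Rightarrow> (nat \<Rightarrow> (nat \<Rightarrow> real) \<Rightarrow> real)
    \<Rightarrow> ((nat \<Rightarrow> real) \<Rightarrow> real) \<Rightarrow> bool" where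
  "SCP1 n a p r = (\<forall>i<n. \<forall>v\<in>{0..1}. \<forall>b\<in>bids n. \<forall>x\<in>{0..1}.
      util a p i (b(i := x)) v + r (b(i := x)) \<le> util a p i (b(i := v)) v + r (b(i := v)))"

text \<open>V i v is the distribution V_{-i} of the other users' (truthful) bids given
  v_i = v, as a measure on bid profiles (the i-th coordinate is irrelevant,
  it is overwritten by user i's bid).\<close>
definition U_BNIC ::
  "nat \<Rightarrow> (nat \<Rightarrow> real \<Rightarrow> (nat \<Rightarrow> real) measure)
    \<Rightarrow> (nat \<Rightarrow> (nat \<Rightarrow> real) \<Rightarrow> real) \<Rightarrow> (nat \<Rightarrow> (nat \<Rightarrow> real) \<Rightarrow> real) \<Rightarrow> bool" where
  "U_BNIC n V a p = (\<forall>i<n. \<forall>v\<in>{0..1}. \<forall>x\<in>{0..1}.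
      (\<integral>bo. util a p i (bo(i := x)) v \<partial>V i v) \<le> (\<integral>bo. util a p i (bo(i := v)) v \<partial>V i v))"

end

theory Submission
  imports Defs
begin

text \<open>Off the event a_i = 0, where theta_i vanishes, the surcharge theta_i / a_i is paid
  with probability a_i, so the utility of user i drops by exactly theta_i. Hence the
  interim utility of every bid drops by the mean of theta_i, which is zero, and
  U-BNIC of the new mechanism is inherited from U-BNIC of the old one, which follows
  from U-DSIC by integrating over the other bids. U-BNIC only concerns the users.\<close>

lemma fun_upd_in_bids:
  assumes "b \<in> bids n" "i < n" "x \<in> {0..1}"
  shows "b(i := x) \<in> bids n"
  using assms unfolding bids_def by auto

lemma util_shifted_payment:
  assumes "a i b = 0 \<Longrightarrow> \<theta> i b = 0"
  shows "util a (\<lambda>i b. p i b + \<theta> i b / a i b) i b w = util a p i b w - \<theta> i b"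
  using assms by (cases "a i b = 0") (simp_all add: util_def field_simps)

lemma borel_measurable_alloc_from_util:
  assumes "(\<lambda>x. util a p i (f x) 1) \<in> borel_measurable M"
    and "(\<lambda>x. util a p i (f x) 0) \<in> borel_measurable M"
  shows "(\<lambda>x. a i (f x)) \<in> borel_measurable M"
proof -
  have "(\<lambda>x. util a p i (f x) 1 - util a p i (f x) 0) \<in> borel_measurable M"
    using assms by measurable
  then show ?thesis
    by (simp add: util_def algebra_simps)
qed

lemma integral_util_shifted_payment:
  assumes supp: "AE bo in M. bo \<in> bids n" and i: "i < n" and x: "x \<in> {0..1}"
    and util_int: "\<And>w. integrable M (\<lambda>bo. util a p i (bo(i := x)) w)"
    and theta_int: "integrable M (\<lambda>bo. \<theta> i (bo(i := x)))"
    and theta_zero: "\<And>b. b \<in> bids n \<Longrightarrow> a i b = 0 \<Longrightarrow> \<theta> i b = 0"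
  shows "(\<integral>bo. util a (\<lambda>i b. p i b + \<theta> i b / a i b) i (bo(i := x)) w \<partial>M)
    = (\<integral>bo. util a p i (bo(i := x)) w \<partial>M) - (\<integral>bo. \<theta> i (bo(i := x)) \<partial>M)"
proof -
  let ?a = "\<lambda>bo. a i (bo(i := x))" and ?\<theta> = "\<lambda>bo. \<theta> i (bo(i := x))"
  have "?a \<in> borel_measurable M"
    using util_int by (intro borel_measurable_alloc_from_util[where f="\<lambda>bo. bo(i := x)"]) auto
  then have "(\<lambda>bo. util a p i (bo(i := x)) 0 + w * ?a bo - ?a bo * (?\<theta> bo / ?a bo))
      \<in> borel_measurable M"
    using util_int[of 0] theta_int by measurable
  then have meas: "(\<lambda>bo. util a (\<lambda>i b. p i b + \<theta> i b / a i b) i (bo(i := x)) w)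
      \<in> borel_measurable M"
    by (simp add: util_def algebra_simps)
  have "(\<integral>bo. util a (\<lambda>i b. p i b + \<theta> i b / a i b) i (bo(i := x)) w \<partial>M)
      = (\<integral>bo. util a p i (bo(i := x)) w - ?\<theta> bo \<partial>M)"
  proof (rule integral_cong_AE[OF meas])
    show "(\<lambda>bo. util a p i (bo(i := x)) w - ?\<theta> bo) \<in> borel_measurable M"
      using util_int theta_int by measurable
    show "AE bo in M. util a (\<lambda>i b. p i b + \<theta> i b / a i b) i (bo(i := x)) w
        = util a p i (bo(i := x)) w - ?\<theta> bo"
      using supp
    proof eventually_elim
      case (elim bo)
      then show ?case
        using util_shifted_payment theta_zero[OF fun_upd_in_bids[OF elim i x]] by blast
    qed
  qed
  also have "\<dots> = (\<integral>bo. util a p i (bo(i := x)) w \<partial>M) - (\<integral>bo. ?\<theta> bo \<partial>M)"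
    using util_int theta_int by (rule Bochner_Integration.integral_diff)
  finally show ?thesis .
qed

lemma U_DSIC_imp_U_BNIC:
  assumes dsic: "U_DSIC n a p"
    and supp: "\<And>i v. i < n \<Longrightarrow> v \<in> {0..1} \<Longrightarrow> AE bo in V i v. bo \<in> bids n"
    and util_int: "\<And>i v x. i < n \<Longrightarrow> v \<in> {0..1} \<Longrightarrow> x \<in> {0..1} \<Longrightarrow>
        integrable (V i v) (\<lambda>bo. util a p i (bo(i := x)) v)"
  shows "U_BNIC n V a p"
  unfolding U_BNIC_def
proof (intro allI impI ballI)
  fix i :: nat and v x :: real assume i: "i < n" and v: "v \<in> {0..1}" and x: "x \<in> {0..1}"
  show "(\<integral>bo. util a p i (bo(i := x)) v \<partial>V i v) \<le> (\<integral>bo. util a p i (bo(i := v)) v \<partial>V i v)"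
    using supp[OF i v]
  proof (intro integral_mono_AE util_int i v x, eventually_elim)
    case (elim bo)
    then show ?case
      using dsic i v x unfolding U_DSIC_def by blast
  qed
qed

lemma U_BNIC_shift_payment:
  assumes bnic: "U_BNIC n V a p"
    and supp: "\<And>i v. i < n \<Longrightarrow> v \<in> {0..1} \<Longrightarrow> AE bo in V i v. bo \<in> bids n"
    and util_int: "\<And>i v x w. i < n \<Longrightarrow> v \<in> {0..1} \<Longrightarrow> x \<in> {0..1} \<Longrightarrow>
        integrable (V i v) (\<lambda>bo. util a p i (bo(i := x)) w)"
    and theta_int: "\<And>i v x. i < n \<Longrightarrow> v \<in> {0..1} \<Longrightarrow> x \<in> {0..1} \<Longrightarrow>
        integrable (V i v) (\<lambda>bo. \<theta> i (bo(i := x)))"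
    and theta_mean: "\<And>i v x. i < n \<Longrightarrow> v \<in> {0..1} \<Longrightarrow> x \<in> {0..1} \<Longrightarrow>
        (\<integral>bo. \<theta> i (bo(i := x)) \<partial>V i v) = 0"
    and theta_zero: "\<And>i b. i < n \<Longrightarrow> b \<in> bids n \<Longrightarrow> a i b = 0 \<Longrightarrow> \<theta> i b = 0"
  shows "U_BNIC n V a (\<lambda>i b. p i b + \<theta> i b / a i b)"
proof -
  have "(\<integral>bo. util a (\<lambda>i b. p i b + \<theta> i b / a i b) i (bo(i := x)) w \<partial>V i v)
      = (\<integral>bo. util a p i (bo(i := x)) w \<partial>V i v)"
    if "i < n" "v \<in> {0..1}" "x \<in> {0..1}" for i v x w
    using integral_util_shifted_payment[where a=a and \<theta>=\<theta>, OF supp[OF that(1,2)] that(1,3)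
        util_int[OF that] theta_int[OF that] theta_zero[OF that(1)]]
      theta_mean[OF that]
    by simp
  with bnic show ?thesis
    unfolding U_BNIC_def by simp
qed

theorem mainTheorem8:
  fixes n :: nat
    and V :: "nat \<Rightarrow> real \<Rightarrow> (nat \<Rightarrow> real) measure"
    and a p \<theta> :: "nat \<Rightarrow> (nat \<Rightarrow> real) \<Rightarrow> real"
  assumes V_prob: "\<And>i v. i < n \<Longrightarrow> v \<in> {0..1} \<Longrightarrow> prob_space (V i v)"
    and V_supp: "\<And>i v. i < n \<Longrightarrow> v \<in> {0..1} \<Longrightarrow> AE bo in V i v. bo \<in> bids n"
    and alloc: "TFM_alloc n a"
    and dsic: "U_DSIC n a p"
    and scp: "SCP1 n a p (\<lambda>_. 0)"
    and util_int: "\<And>i v x w. i < n \<Longrightarrow> v \<in> {0..1} \<Longrightarrow> x \<in> {0..1} \<Longrightarrow>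
        integrable (V i v) (\<lambda>bo. util a p i (bo(i := x)) w)"
    and theta_int: "\<And>i v x. i < n \<Longrightarrow> v \<in> {0..1} \<Longrightarrow> x \<in> {0..1} \<Longrightarrow>
        integrable (V i v) (\<lambda>bo. \<theta> i (bo(i := x)))"
    and theta_mean: "\<And>i v x. i < n \<Longrightarrow> v \<in> {0..1} \<Longrightarrow> x \<in> {0..1} \<Longrightarrow>
        (\<integral>bo. \<theta> i (bo(i := x)) \<partial>V i v) = 0"
    and theta_def: "\<And>i b. i < n \<Longrightarrow> b \<in> bids n \<Longrightarrow> a i b = 0 \<Longrightarrow> \<theta> i b = 0"
  shows "U_BNIC n V a (\<lambda>i b. p i b + \<theta> i b / a i b)"
proof (rule U_BNIC_shift_payment)
  show "U_BNIC n V a p"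
    using dsic V_supp util_int by (rule U_DSIC_imp_U_BNIC)
qed (fact V_supp util_int theta_int theta_mean theta_def)+

end
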